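(* The forgetful functor $U\colon \mathbf{Lens}\to\mathbf{Cat}$ preserves and reflects epimorphisms: a lens $E$ is an epimorphism in $\mathbf{Lens}$ if and only if its get functor $UE$ is an epimorphism in $\mathbf{Cat}$.
   Context: $\mathbf{Cat}$ is the category of small categories and functors. A lens $F\colon \mathbf{A}\to\mathbf{B}$ between small categories consists of a functor $F\colon\mathbf{A}\to\mathbf{B}$ (the get functor) together with, for each object $A$ of $\mathbf{A}$, a function $\varphi_{F,A}$ from the set of morphisms of $\mathbf{B}$ with domain $FA$ to the set of morphisms of $\mathbf{A}$ with domain $A$, such that: $F(\varphi_{F,A}b)=b$; $\varphi_{F,A}(\mathrm{id}_{FA})=\mathrm{id}_A$; and $\varphi_{F,A}(b'\circ b)=\varphi_{F,A'}(b')\circ\varphi_{F,A}(b)$ whenever $b$ has domain $FA$, $A'$ is the codomain of $\varphi_{F,A}b$, and $b'$ has domain $FA'$. $\mathbf{Lens}$ is the category of small categories and lenses; the composite of $F\colon\mathbf{A}\to\mathbf{B}$ and $G\colon\mathbf{B}\to\mathbf{C}$ has get functor $G\circ F$ and put functions $\varphi_{G\circ F,A}(c)=\varphi_{F,A}(\varphi_{G,FA}(c))$. $U\colon\mathbf{Lens}\to\mathbf{Cat}$ is the identity-on-objects functor sending a lens to its get functor. *)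

theory Defs
  imports Main
begin

text \<open>Small categories are modelled relative to a universe type 'u: objects and
morphisms of every category considered are elements of 'u.\<close>

record 'u cat =
  c_obj  :: "'u set"
  c_arr  :: "'u set"
  c_dom  :: "'u \<Rightarrow> 'u"
  c_cod  :: "'u \<Rightarrow> 'u"
  c_id   :: "'u \<Rightarrow> 'u"
  c_comp :: "'u \<Rightarrow> 'u \<Rightarrow> 'u"  (* c_comp C g f = g \<circ> f *)

definition is_category :: "'u cat \<Rightarrow> bool" where
  "is_category C \<longleftrightarrow>
     (\<forall>f\<in>c_arr C. c_dom C f \<in> c_obj C \<and> c_cod C f \<in> c_obj C)
   \<and> (\<forall>a\<in>c_obj C. c_id C a \<in> c_arr C \<and> c_dom C (c_id C a) = a \<and> c_cod C (c_id C a) = a)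
   \<and> (\<forall>f\<in>c_arr C. \<forall>g\<in>c_arr C. c_cod C f = c_dom C g \<longrightarrow>
        c_comp C g f \<in> c_arr C \<and> c_dom C (c_comp C g f) = c_dom C f
        \<and> c_cod C (c_comp C g f) = c_cod C g)
   \<and> (\<forall>f\<in>c_arr C. c_comp C f (c_id C (c_dom C f)) = f \<and> c_comp C (c_id C (c_cod C f)) f = f)
   \<and> (\<forall>f\<in>c_arr C. \<forall>g\<in>c_arr C. \<forall>h\<in>c_arr C.
        c_cod C f = c_dom C g \<longrightarrow> c_cod C g = c_dom C h \<longrightarrow>
        c_comp C h (c_comp C g f) = c_comp C (c_comp C h g) f)"

record 'u ftor =
  fobj :: "'u \<Rightarrow> 'u"
  farr :: "'u \<Rightarrow> 'u"

definition is_functor :: "'u cat \<Rightarrow> 'u cat \<Rightarrow> 'u ftor \<Rightarrow> bool" where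
  "is_functor A B F \<longleftrightarrow>
     (\<forall>a\<in>c_obj A. fobj F a \<in> c_obj B)
   \<and> (\<forall>f\<in>c_arr A. farr F f \<in> c_arr B \<and> c_dom B (farr F f) = fobj F (c_dom A f)
        \<and> c_cod B (farr F f) = fobj F (c_cod A f))
   \<and> (\<forall>a\<in>c_obj A. farr F (c_id A a) = c_id B (fobj F a))
   \<and> (\<forall>f\<in>c_arr A. \<forall>g\<in>c_arr A. c_cod A f = c_dom A g \<longrightarrow>
        farr F (c_comp A g f) = c_comp B (farr F g) (farr F f))"

definition ftor_eq :: "'u cat \<Rightarrow> 'u ftor \<Rightarrow> 'u ftor \<Rightarrow> bool" where
  "ftor_eq A F G \<longleftrightarrow> (\<forall>a\<in>c_obj A. fobj F a = fobj G a) \<and> (\<forall>f\<in>c_arr A. farr F f = farr G f)"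

definition ftor_comp :: "'u ftor \<Rightarrow> 'u ftor \<Rightarrow> 'u ftor" where
  "ftor_comp G F = \<lparr>fobj = fobj G \<circ> fobj F, farr = farr G \<circ> farr F\<rparr>"

text \<open>A lens: get functor plus put functions; put L a b is the lift of b at object a.\<close>
record 'u lens =
  get :: "'u ftor"
  put :: "'u \<Rightarrow> 'u \<Rightarrow> 'u"

definition is_lens :: "'u cat \<Rightarrow> 'u cat \<Rightarrow> 'u lens \<Rightarrow> bool" where
  "is_lens A B L \<longleftrightarrow>
     is_functor A B (get L)
   \<and> (\<forall>a\<in>c_obj A. \<forall>b\<in>c_arr B. c_dom B b = fobj (get L) a \<longrightarrow>
        put L a b \<in> c_arr A \<and> c_dom A (put L a b) = a \<and> farr (get L) (put L a b) = b)
   \<and> (\<forall>a\<in>c_obj A. put L a (c_id B (fobj (get L) a)) = c_id A a)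
   \<and> (\<forall>a\<in>c_obj A. \<forall>b\<in>c_arr B. \<forall>b'\<in>c_arr B.
        c_dom B b = fobj (get L) a \<longrightarrow> c_dom B b' = fobj (get L) (c_cod A (put L a b)) \<longrightarrow>
        put L a (c_comp B b' b) = c_comp A (put L (c_cod A (put L a b)) b') (put L a b))"

definition lens_eq :: "'u cat \<Rightarrow> 'u cat \<Rightarrow> 'u lens \<Rightarrow> 'u lens \<Rightarrow> bool" where
  "lens_eq A B L M \<longleftrightarrow> ftor_eq A (get L) (get M)
     \<and> (\<forall>a\<in>c_obj A. \<forall>b\<in>c_arr B. c_dom B b = fobj (get L) a \<longrightarrow> put L a b = put M a b)"

definition lens_comp :: "'u lens \<Rightarrow> 'u lens \<Rightarrow> 'u lens" where
  "lens_comp M L = \<lparr>get = ftor_comp (get M) (get L),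
                     put = (\<lambda>a c. put L a (put M (fobj (get L) a) c))\<rparr>"

definition cat_epi :: "'u cat \<Rightarrow> 'u cat \<Rightarrow> 'u ftor \<Rightarrow> bool" where
  "cat_epi A B E \<longleftrightarrow> (\<forall>(C :: 'u cat) F G. is_category C \<longrightarrow> is_functor B C F \<longrightarrow> is_functor B C G \<longrightarrow>
      ftor_eq A (ftor_comp F E) (ftor_comp G E) \<longrightarrow> ftor_eq B F G)"

definition lens_epi :: "'u cat \<Rightarrow> 'u cat \<Rightarrow> 'u lens \<Rightarrow> bool" where
  "lens_epi A B E \<longleftrightarrow> (\<forall>(C :: 'u cat) F G. is_category C \<longrightarrow> is_lens B C F \<longrightarrow> is_lens B C G \<longrightarrow>
      lens_eq A C (lens_comp F E) (lens_comp G E) \<longrightarrow> lens_eq B C F G)"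

end

theory Submission imports Defs begin

text \<open>Both sides are equivalent to the get functor of E being surjective on objects.
If it is, the lifting property of E makes it surjective on arrows too, and such a functor is
epi in either sense.  If it is not, the image S of E on objects is closed under codomains
(again by lifting), so the pushout of B with itself along the full subcategory on S is
obtained by doubling the objects outside S and the arrows with domain outside S.  Its two
coprojections are lenses which agree after E but differ on an object outside S.\<close>

lemma inj_prod_bool_if_infinite:
  assumes "infinite (UNIV :: 'u set)"
  obtains e :: "'u \<times> bool \<Rightarrow> 'u" where "inj e"
proof -
  obtain f :: "'u \<times> 'u \<Rightarrow> 'u" where "bij_betw f UNIV UNIV"
    using card_of_Times_same_infinite[OF assms] card_of_ordIso by fastforce
  then have "inj f" by (simp add: bij_betw_def)
  obtain u0 u1 :: 'u where "u0 \<noteq> u1"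
    using assms by (metis finite.emptyI finite_insert UNIV_eq_I insertCI)
  then have bool_inj: "inj (\<lambda>b. if b then u1 else u0)" by (auto simp: inj_def)
  have "inj (map_prod id (\<lambda>b. if b then u1 else u0))"
    using map_prod_inj_on[OF inj_on_id[of UNIV] bool_inj] by simp
  with \<open>inj f\<close> show thesis using inj_compose that by blast
qed

text \<open>Under an injection e (which exists as 'u is infinite), e (x, True) is x in the
first copy of B and e (x, False), for x outside S, is x in the second copy; a second-copy
arrow whose codomain lies in S ends in the first copy.\<close>

definition doubled_cat :: "('u \<times> bool \<Rightarrow> 'u) \<Rightarrow> 'u cat \<Rightarrow> 'u set \<Rightarrow> 'u cat" where
  "doubled_cat e B S =
    \<lparr>c_obj = {e (x, True) |x. x \<in> c_obj B} \<union> {e (x, False) |x. x \<in> c_obj B \<and> x \<notin> S},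
     c_arr = {e (f, True) |f. f \<in> c_arr B} \<union> {e (f, False) |f. f \<in> c_arr B \<and> c_dom B f \<notin> S},
     c_dom = (\<lambda>u. e (c_dom B (fst (inv e u)), snd (inv e u))),
     c_cod = (\<lambda>u. e (c_cod B (fst (inv e u)), snd (inv e u) \<or> c_cod B (fst (inv e u)) \<in> S)),
     c_id = (\<lambda>u. e (c_id B (fst (inv e u)), snd (inv e u))),
     c_comp = (\<lambda>v u. e (c_comp B (fst (inv e v)) (fst (inv e u)), snd (inv e u)))\<rparr>"

definition doubled_inl :: "('u \<times> bool \<Rightarrow> 'u) \<Rightarrow> 'u lens" where
  "doubled_inl e =
    \<lparr>get = \<lparr>fobj = (\<lambda>x. e (x, True)), farr = (\<lambda>f. e (f, True))\<rparr>, put = (\<lambda>x u. fst (inv e u))\<rparr>"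

definition doubled_inr :: "('u \<times> bool \<Rightarrow> 'u) \<Rightarrow> 'u cat \<Rightarrow> 'u set \<Rightarrow> 'u lens" where
  "doubled_inr e B S =
    \<lparr>get = \<lparr>fobj = (\<lambda>x. e (x, x \<in> S)), farr = (\<lambda>f. e (f, c_dom B f \<in> S))\<rparr>,
     put = (\<lambda>x u. fst (inv e u))\<rparr>"

locale doubling =
  fixes e :: "'u \<times> bool \<Rightarrow> 'u" and B :: "'u cat" and S :: "'u set"
  assumes inj: "inj e" and category: "is_category B"
    and cod_closed: "\<And>f. f \<in> c_arr B \<Longrightarrow> c_dom B f \<in> S \<Longrightarrow> c_cod B f \<in> S"
begin

lemma inv_e [simp]: "inv e (e p) = p"
  using inj by simp

lemma e_eq_iff [simp]: "e p = e q \<longleftrightarrow> p = q"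
  using inj by (simp add: inj_eq)

lemma is_category_doubled: "is_category (doubled_cat e B S)"
  unfolding is_category_def doubled_cat_def
  by (intro conjI ballI impI) (use category[unfolded is_category_def] cod_closed in auto)

lemma is_lens_doubled_inl: "is_lens B (doubled_cat e B S) (doubled_inl e)"
  unfolding is_lens_def is_functor_def doubled_cat_def doubled_inl_def
  by (intro conjI ballI impI) (use category[unfolded is_category_def] cod_closed in auto)

lemma is_lens_doubled_inr: "is_lens B (doubled_cat e B S) (doubled_inr e B S)"
  unfolding is_lens_def is_functor_def doubled_cat_def doubled_inr_def
  by (intro conjI ballI impI) (use category[unfolded is_category_def] cod_closed in auto)

lemma fobj_doubled_inr_eq_iff:
  "fobj (get (doubled_inr e B S)) x = fobj (get (doubled_inl e)) x \<longleftrightarrow> x \<in> S"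
  by (simp add: doubled_inl_def doubled_inr_def)

lemma farr_doubled_inr_eq:
  "c_dom B f \<in> S \<Longrightarrow> farr (get (doubled_inr e B S)) f = farr (get (doubled_inl e)) f"
  by (simp add: doubled_inl_def doubled_inr_def)

lemma put_doubled_inr_eq: "put (doubled_inr e B S) = put (doubled_inl e)"
  by (simp add: doubled_inl_def doubled_inr_def)

end

lemma lens_put:
  assumes "is_lens A B L" and "a \<in> c_obj A" and "b \<in> c_arr B" and "c_dom B b = fobj (get L) a"
  shows "put L a b \<in> c_arr A" and "c_dom A (put L a b) = a" and "farr (get L) (put L a b) = b"
  using assms unfolding is_lens_def by auto

lemma lens_image_cod_closed:
  assumes "is_category A" and E: "is_lens A B E" and "f \<in> c_arr B"
    and "c_dom B f \<in> fobj (get E) ` c_obj A"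
  shows "c_cod B f \<in> fobj (get E) ` c_obj A"
proof -
  obtain a where a: "a \<in> c_obj A" "c_dom B f = fobj (get E) a"
    using assms(4) by blast
  let ?g = "put E a f"
  have g: "?g \<in> c_arr A" "c_dom A ?g = a" "farr (get E) ?g = f"
    using lens_put[OF E a(1) \<open>f \<in> c_arr B\<close> a(2)] by simp_all
  then have "c_cod B f = fobj (get E) (c_cod A ?g)"
    using E unfolding is_lens_def is_functor_def by metis
  moreover have "c_cod A ?g \<in> c_obj A"
    using \<open>is_category A\<close> g unfolding is_category_def by blast
  ultimately show ?thesis by blast
qed

lemma lens_arr_surj_if_obj_surj:
  assumes "is_category B" and E: "is_lens A B E"
    and surj: "c_obj B \<subseteq> fobj (get E) ` c_obj A"
  shows "c_arr B \<subseteq> farr (get E) ` c_arr A"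
proof
  fix g assume g: "g \<in> c_arr B"
  then have "c_dom B g \<in> c_obj B"
    using \<open>is_category B\<close> unfolding is_category_def by blast
  then obtain a where a: "a \<in> c_obj A" "c_dom B g = fobj (get E) a"
    using surj by blast
  show "g \<in> farr (get E) ` c_arr A"
    using lens_put[OF E a(1) g a(2)] by (metis image_eqI)
qed

lemma ftor_eq_if_surj:
  assumes obj_surj: "c_obj B \<subseteq> fobj E ` c_obj A"
    and arr_surj: "c_arr B \<subseteq> farr E ` c_arr A"
    and eq: "ftor_eq A (ftor_comp F E) (ftor_comp G E)"
  shows "ftor_eq B F G"
  using eq obj_surj arr_surj unfolding ftor_eq_def ftor_comp_def by fastforce

lemma separating_lenses_if_not_obj_surj:
  assumes "infinite (UNIV :: 'u set)" and A: "is_category A" and "is_category B"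
    and E: "is_lens A B E" and b: "b \<notin> fobj (get E) ` c_obj A"
  obtains C :: "'u cat" and F G where "is_category C" "is_lens B C F" "is_lens B C G"
    "lens_eq A C (lens_comp F E) (lens_comp G E)" "fobj (get F) b \<noteq> fobj (get G) b"
proof -
  obtain e :: "'u \<times> bool \<Rightarrow> 'u" where "inj e"
    using inj_prod_bool_if_infinite[OF assms(1)] .
  let ?S = "fobj (get E) ` c_obj A"
  interpret doubling e B ?S
    using \<open>inj e\<close> \<open>is_category B\<close> lens_image_cod_closed[OF A E] by unfold_locales
  let ?F = "doubled_inr e B ?S" and ?G = "doubled_inl e"
  have "c_dom B (farr (get E) f) \<in> ?S" if "f \<in> c_arr A" for f
    using that A E unfolding is_category_def is_lens_def is_functor_def by auto
  then have "lens_eq A (doubled_cat e B ?S) (lens_comp ?F E) (lens_comp ?G E)"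
    using fobj_doubled_inr_eq_iff farr_doubled_inr_eq put_doubled_inr_eq
    unfolding lens_eq_def ftor_eq_def lens_comp_def ftor_comp_def by simp
  moreover have "fobj (get ?F) b \<noteq> fobj (get ?G) b"
    using b fobj_doubled_inr_eq_iff by blast
  ultimately show thesis
    using that is_category_doubled is_lens_doubled_inr is_lens_doubled_inl by blast
qed

lemma lens_epi_if_obj_surj:
  assumes "is_category B" and E: "is_lens A B E"
    and surj: "c_obj B \<subseteq> fobj (get E) ` c_obj A"
  shows "lens_epi A B E"
  unfolding lens_epi_def
proof (intro allI impI)
  fix C F G
  assume F: "is_lens B C F" and G: "is_lens B C G"
    and eq: "lens_eq A C (lens_comp F E) (lens_comp G E)"
  have get_eq: "ftor_eq B (get F) (get G)"
    using ftor_eq_if_surj[OF surj lens_arr_surj_if_obj_surj[OF assms]] eq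
    by (simp add: lens_eq_def lens_comp_def)
  have "put F b c = put G b c"
    if b: "b \<in> c_obj B" and c: "c \<in> c_arr C" "c_dom C c = fobj (get F) b" for b c
  proof -
    obtain a where a: "a \<in> c_obj A" "b = fobj (get E) a"
      using surj b by blast
    have "c_dom C c = fobj (get G) b"
      using get_eq b c unfolding ftor_eq_def by auto
    then have "put F b c \<in> c_arr B" "c_dom B (put F b c) = fobj (get E) a"
      and "put G b c \<in> c_arr B" "c_dom B (put G b c) = fobj (get E) a"
      using lens_put[OF F b c] lens_put[OF G b c(1)] a(2) by simp_all
    \<comment> \<open>both puts are recovered from their common lift along E\<close>
    then have "put F b c = farr (get E) (put E a (put F b c))"
      and "put G b c = farr (get E) (put E a (put G b c))"
      using lens_put(3)[OF E a(1)] by simp_all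
    moreover have "put E a (put F b c) = put E a (put G b c)"
      using eq a c unfolding lens_eq_def lens_comp_def ftor_comp_def by auto
    ultimately show ?thesis by simp
  qed
  with get_eq show "lens_eq B C F G"
    unfolding lens_eq_def by blast
qed

lemma lens_epi_iff_obj_surj:
  fixes A B :: "'u cat"
  assumes "infinite (UNIV :: 'u set)" and "is_category A" and "is_category B"
    and "is_lens A B E"
  shows "lens_epi A B E \<longleftrightarrow> c_obj B \<subseteq> fobj (get E) ` c_obj A"
proof
  assume epi: "lens_epi A B E"
  show "c_obj B \<subseteq> fobj (get E) ` c_obj A"
  proof (rule subsetI, rule ccontr)
    fix b assume b: "b \<in> c_obj B" "b \<notin> fobj (get E) ` c_obj A"
    obtain C :: "'u cat" and F G where "is_category C" "is_lens B C F" "is_lens B C G"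
      and "lens_eq A C (lens_comp F E) (lens_comp G E)"
      and differ: "fobj (get F) b \<noteq> fobj (get G) b"
      by (rule separating_lenses_if_not_obj_surj[OF assms b(2)])
    with epi have "lens_eq B C F G"
      unfolding lens_epi_def by blast
    with b(1) differ show False
      unfolding lens_eq_def ftor_eq_def by blast
  qed
next
  assume "c_obj B \<subseteq> fobj (get E) ` c_obj A"
  with assms show "lens_epi A B E"
    using lens_epi_if_obj_surj by blast
qed

lemma cat_epi_get_iff_obj_surj:
  fixes A B :: "'u cat"
  assumes "infinite (UNIV :: 'u set)" and "is_category A" and "is_category B"
    and "is_lens A B E"
  shows "cat_epi A B (get E) \<longleftrightarrow> c_obj B \<subseteq> fobj (get E) ` c_obj A"
proof
  assume epi: "cat_epi A B (get E)"
  show "c_obj B \<subseteq> fobj (get E) ` c_obj A"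
  proof (rule subsetI, rule ccontr)
    fix b assume b: "b \<in> c_obj B" "b \<notin> fobj (get E) ` c_obj A"
    obtain C :: "'u cat" and F G where "is_category C"
      and F: "is_lens B C F" and G: "is_lens B C G"
      and eq: "lens_eq A C (lens_comp F E) (lens_comp G E)"
      and differ: "fobj (get F) b \<noteq> fobj (get G) b"
      by (rule separating_lenses_if_not_obj_surj[OF assms b(2)])
    moreover have "is_functor B C (get F)" "is_functor B C (get G)"
      using F G unfolding is_lens_def by simp_all
    moreover have "ftor_eq A (ftor_comp (get F) (get E)) (ftor_comp (get G) (get E))"
      using eq by (simp add: lens_eq_def lens_comp_def)
    ultimately have "ftor_eq B (get F) (get G)"
      using epi unfolding cat_epi_def by blast
    with b(1) differ show False
      unfolding ftor_eq_def by blast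
  qed
next
  assume surj: "c_obj B \<subseteq> fobj (get E) ` c_obj A"
  with assms have "c_arr B \<subseteq> farr (get E) ` c_arr A"
    using lens_arr_surj_if_obj_surj by blast
  with surj show "cat_epi A B (get E)"
    unfolding cat_epi_def using ftor_eq_if_surj by blast
qed

theorem theorem3p6:
  fixes A B :: "'u cat" and E :: "'u lens"
  assumes "infinite (UNIV :: 'u set)"
    and "is_category A" and "is_category B" and "is_lens A B E"
  shows "lens_epi A B E \<longleftrightarrow> cat_epi A B (get E)"
  using lens_epi_iff_obj_surj[OF assms] cat_epi_get_iff_obj_surj[OF assms] by simp

end
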